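(* If $(S,K,I)$ is a split graph, then the factor graph $\Phi(S)$ cannot contain an induced path $v_1v_2v_3v_4$ with $\sigma_{23}=1$ and $d_1\leq d_2\geq d_4$.
   Context: A split graph $(S,K,I)$ is a graph $S$ together with a fixed partition $V(S)=K\dot\cup I$, where $K$ is a clique and $I$ is an independent set. For a vertex $v_i$ of $S$, $N_i$ denotes its open neighborhood in $S$ and $d_i=|N_i|$; $\eta_{uv}=|N_u\cap N_v|$. The factor graph $\Phi(S)$ is the loopless multigraph with vertex set $I$ in which, for distinct $u,v\in I$, there is one edge joining $u$ and $v$ for each 2-switch of $S$ acting on $u$ and $v$ (a 2-switch replaces edges $ab,cd$ with $ac,bd$ when $ab,cd\in E(S)$ and $ac,bd\notin E(S)$); equivalently, the multiplicity of $uv$ is $\sigma_{uv}=(d_u-\eta_{uv})(d_v-\eta_{uv})$, and $u,v$ are adjacent iff $\sigma_{uv}>0$; $\sigma_{ij}$ denotes $\sigma_{v_iv_j}$. An induced path in $\Phi(S)$ consists of distinct vertices with consecutive ones adjacent and no other pair adjacent (multiplicities ignored). *)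

theory Defs
  imports Main
begin

definition simple_graph :: "'a set \<Rightarrow> ('a \<Rightarrow> 'a \<Rightarrow> bool) \<Rightarrow> bool" where
  "simple_graph V E \<longleftrightarrow> finite V \<and> (\<forall>u v. E u v \<longrightarrow> u \<in> V \<and> v \<in> V)
     \<and> (\<forall>u v. E u v \<longrightarrow> E v u) \<and> (\<forall>v. \<not> E v v)"

definition split_graph :: "'a set \<Rightarrow> ('a \<Rightarrow> 'a \<Rightarrow> bool) \<Rightarrow> 'a set \<Rightarrow> 'a set \<Rightarrow> bool" where
  "split_graph V E K I \<longleftrightarrow> simple_graph V E \<and> K \<union> I = V \<and> K \<inter> I = {}
     \<and> (\<forall>u\<in>K. \<forall>v\<in>K. u \<noteq> v \<longrightarrow> E u v)
     \<and> (\<forall>u\<in>I. \<forall>v\<in>I. \<not> E u v)"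

definition nbhd :: "'a set \<Rightarrow> ('a \<Rightarrow> 'a \<Rightarrow> bool) \<Rightarrow> 'a \<Rightarrow> 'a set" where
  "nbhd V E v = {w \<in> V. E v w}"

definition deg :: "'a set \<Rightarrow> ('a \<Rightarrow> 'a \<Rightarrow> bool) \<Rightarrow> 'a \<Rightarrow> nat" where
  "deg V E v = card (nbhd V E v)"

definition eta :: "'a set \<Rightarrow> ('a \<Rightarrow> 'a \<Rightarrow> bool) \<Rightarrow> 'a \<Rightarrow> 'a \<Rightarrow> nat" where
  "eta V E u v = card (nbhd V E u \<inter> nbhd V E v)"

text \<open>Multiplicity of the edge uv in the factor graph.\<close>
definition sigma :: "'a set \<Rightarrow> ('a \<Rightarrow> 'a \<Rightarrow> bool) \<Rightarrow> 'a \<Rightarrow> 'a \<Rightarrow> nat" where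
  "sigma V E u v = (deg V E u - eta V E u v) * (deg V E v - eta V E u v)"

definition factor_adj :: "'a set \<Rightarrow> ('a \<Rightarrow> 'a \<Rightarrow> bool) \<Rightarrow> 'a set \<Rightarrow> 'a \<Rightarrow> 'a \<Rightarrow> bool" where
  "factor_adj V E I u v \<longleftrightarrow> u \<in> I \<and> v \<in> I \<and> u \<noteq> v \<and> sigma V E u v > 0"

definition factor_induced_path :: "'a set \<Rightarrow> ('a \<Rightarrow> 'a \<Rightarrow> bool) \<Rightarrow> 'a set \<Rightarrow> 'a list \<Rightarrow> bool" where
  "factor_induced_path V E I ps \<longleftrightarrow> distinct ps \<and> set ps \<subseteq> I
     \<and> (\<forall>i j. i < length ps \<and> j < length ps \<longrightarrow>
          (factor_adj V E I (ps ! i) (ps ! j) \<longleftrightarrow> (i = j + 1 \<or> j = i + 1)))"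

end

theory Submission
  imports Defs
begin

text \<open>
  Two vertices of \<open>I\<close> are adjacent in \<open>\<Phi>(S)\<close> exactly when their neighbourhoods are
  incomparable under inclusion, and \<open>\<sigma>\<^sub>2\<^sub>3 = 1\<close> says that \<open>N\<^sub>2\<close> and \<open>N\<^sub>3\<close> differ by swapping
  one vertex \<open>x \<in> N\<^sub>2\<close> for one vertex \<open>y \<in> N\<^sub>3\<close>; in particular \<open>d\<^sub>2 = d\<^sub>3\<close>. The degree
  conditions turn the non-edges \<open>v\<^sub>2v\<^sub>4\<close> and \<open>v\<^sub>1v\<^sub>3\<close> into \<open>N\<^sub>4 \<subseteq> N\<^sub>2\<close> and \<open>N\<^sub>1 \<subseteq> N\<^sub>3\<close>. The
  edge \<open>v\<^sub>3v\<^sub>4\<close> then forces \<open>x \<in> N\<^sub>4\<close>, and the edge \<open>v\<^sub>1v\<^sub>2\<close> forces \<open>y \<in> N\<^sub>1\<close>, so \<open>N\<^sub>1\<close> and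
  \<open>N\<^sub>4\<close> are incomparable and \<open>v\<^sub>1v\<^sub>4\<close> would be an edge.
\<close>

lemma card_eq_iff_card_Diff_eq:
  assumes "finite A" "finite B"
  shows "card A = card B \<longleftrightarrow> card (A - B) = card (B - A)"
  using assms card_Diff_subset_Int[of A B] card_Diff_subset_Int[of B A]
    card_mono[of A "A \<inter> B"] card_mono[of B "A \<inter> B"]
  by (simp add: Int_commute) linarith

lemma comparable_card_le_imp_subset:
  assumes "finite A" "A \<subseteq> B \<or> B \<subseteq> A" "card A \<le> card B"
  shows "A \<subseteq> B"
  using assms card_seteq[of A B] by blast

lemma incomparable_of_unit_swap:
  fixes A B C D :: "'a set"
  assumes fin: "finite A" "finite B" "finite C" "finite D"
    and swap: "card (B - C) = 1" "card (C - B) = 1"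
    and AB: "\<not> A \<subseteq> B" and DC: "\<not> D \<subseteq> C"
    and AC: "A \<subseteq> C \<or> C \<subseteq> A" and BD: "B \<subseteq> D \<or> D \<subseteq> B"
    and card_A: "card A \<le> card B" and card_D: "card D \<le> card B"
  shows "\<not> A \<subseteq> D \<and> \<not> D \<subseteq> A"
proof -
  have "card B = card C"
    using swap card_eq_iff_card_Diff_eq[OF fin(2,3)] by simp
  then have "A \<subseteq> C"
    using comparable_card_le_imp_subset[OF fin(1) AC] card_A by simp
  have "D \<subseteq> B"
    using comparable_card_le_imp_subset[OF fin(4)] BD card_D by blast
  obtain x where x: "B - C = {x}" using swap(1) card_1_singletonE by blast
  obtain y where y: "C - B = {y}" using swap(2) card_1_singletonE by blast
  have "x \<in> D"
  proof -
    obtain z where "z \<in> D" "z \<notin> C" using DC by blast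
    with \<open>D \<subseteq> B\<close> have "z \<in> B - C" by blast
    with x \<open>z \<in> D\<close> show ?thesis by simp
  qed
  moreover have "y \<in> A"
  proof -
    obtain z where "z \<in> A" "z \<notin> B" using AB by blast
    with \<open>A \<subseteq> C\<close> have "z \<in> C - B" by blast
    with y \<open>z \<in> A\<close> show ?thesis by simp
  qed
  moreover have "x \<notin> C" "y \<notin> B"
    using x y by auto
  ultimately show ?thesis
    using \<open>A \<subseteq> C\<close> \<open>D \<subseteq> B\<close> by blast
qed

lemma sigma_eq_card_Diff:
  assumes "finite V"
  shows "sigma V E u v = card (nbhd V E u - nbhd V E v) * card (nbhd V E v - nbhd V E u)"
proof -
  have "finite (nbhd V E w)" for w
    using assms unfolding nbhd_def by simp
  then show ?thesis
    unfolding sigma_def eta_def deg_def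
    using card_Diff_subset_Int[of "nbhd V E u" "nbhd V E v"]
      card_Diff_subset_Int[of "nbhd V E v" "nbhd V E u"]
    by (simp add: Int_commute)
qed

lemma factor_adj_iff_incomparable:
  assumes "finite V" "u \<in> I" "v \<in> I" "u \<noteq> v"
  shows "factor_adj V E I u v \<longleftrightarrow> \<not> nbhd V E u \<subseteq> nbhd V E v \<and> \<not> nbhd V E v \<subseteq> nbhd V E u"
proof -
  have "finite (nbhd V E w)" for w
    using assms(1) unfolding nbhd_def by simp
  then show ?thesis
    unfolding factor_adj_def sigma_eq_card_Diff[OF assms(1)]
    using assms(2-4) by (auto simp: card_gt_0_iff)
qed

lemma factor_induced_path4_nbhd:
  assumes "finite V" and path: "factor_induced_path V E I [a, b, c, d]"
  defines "N \<equiv> nbhd V E"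
  shows "\<not> N a \<subseteq> N b" "\<not> N d \<subseteq> N c"
    "N a \<subseteq> N c \<or> N c \<subseteq> N a" "N b \<subseteq> N d \<or> N d \<subseteq> N b" "N a \<subseteq> N d \<or> N d \<subseteq> N a"
proof -
  let ?ps = "[a, b, c, d]"
  have incomparable_iff:
    "(\<not> N (?ps ! i) \<subseteq> N (?ps ! j) \<and> \<not> N (?ps ! j) \<subseteq> N (?ps ! i)) \<longleftrightarrow> i = j + 1 \<or> j = i + 1"
    if "i < 4" "j < 4" "i \<noteq> j" for i j
  proof -
    have "?ps ! i \<in> I" "?ps ! j \<in> I" "?ps ! i \<noteq> ?ps ! j"
      using path that nth_mem[of i ?ps] nth_mem[of j ?ps] nth_eq_iff_index_eq[of ?ps i j]
      unfolding factor_induced_path_def by auto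
    then have "factor_adj V E I (?ps ! i) (?ps ! j) \<longleftrightarrow>
        \<not> N (?ps ! i) \<subseteq> N (?ps ! j) \<and> \<not> N (?ps ! j) \<subseteq> N (?ps ! i)"
      unfolding N_def by (rule factor_adj_iff_incomparable[OF assms(1)])
    with path that show ?thesis
      unfolding factor_induced_path_def by auto
  qed
  show "\<not> N a \<subseteq> N b" using incomparable_iff[of 0 1] by simp
  show "\<not> N d \<subseteq> N c" using incomparable_iff[of 2 3] by simp
  show "N a \<subseteq> N c \<or> N c \<subseteq> N a" using incomparable_iff[of 0 2] by simp
  show "N b \<subseteq> N d \<or> N d \<subseteq> N b" using incomparable_iff[of 1 3] by simp
  show "N a \<subseteq> N d \<or> N d \<subseteq> N a" using incomparable_iff[of 0 3] by simp
qed

theorem lemma4p2: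
  fixes V K I :: "'a set" and E :: "'a \<Rightarrow> 'a \<Rightarrow> bool"
  assumes "split_graph V E K I"
  shows "\<not> (\<exists>v1 v2 v3 v4. factor_induced_path V E I [v1, v2, v3, v4]
              \<and> sigma V E v2 v3 = 1
              \<and> deg V E v1 \<le> deg V E v2 \<and> deg V E v4 \<le> deg V E v2)"
proof (intro notI, elim exE conjE)
  fix v1 v2 v3 v4
  assume path: "factor_induced_path V E I [v1, v2, v3, v4]" and sigma23: "sigma V E v2 v3 = 1"
    and deg1: "deg V E v1 \<le> deg V E v2" and deg4: "deg V E v4 \<le> deg V E v2"
  have "finite V"
    using assms unfolding split_graph_def simple_graph_def by simp
  then have fin: "finite (nbhd V E w)" for w
    unfolding nbhd_def by simp
  note nbhd_facts = factor_induced_path4_nbhd[OF \<open>finite V\<close> path]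
  have "card (nbhd V E v2 - nbhd V E v3) = 1" "card (nbhd V E v3 - nbhd V E v2) = 1"
    using sigma23 unfolding sigma_eq_card_Diff[OF \<open>finite V\<close>] by simp_all
  from incomparable_of_unit_swap[OF fin fin fin fin this nbhd_facts(1-4)]
  show False
    using nbhd_facts(5) deg1 deg4 unfolding deg_def by blast
qed

end
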